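(* Let $G$ be a partial cube in which every convex cycle is a $6$-cycle, and let $P=v_0v_1\cdots v_l$ ($l\geqslant 3$) be a path in $G$. If $P$ is of type-II, then $P$ is a shortest $v_0,v_l$-path (geodesic) in $G$.
   Context: A partial cube is a connected graph isomorphic to an isometric subgraph of a hypercube. A subgraph $H$ is convex if for all $u,v\in V(H)$ every shortest $u,v$-path of $G$ lies in $H$; a convex cycle is a cycle that is a convex subgraph. The Djoković–Winkler relation $\Theta$ on edges: $uv\,\Theta\,xy$ iff $d(u,x)+d(v,y)\neq d(u,y)+d(v,x)$; in a partial cube it is an equivalence relation, and $F_e$ denotes the $\Theta$-class of edge $e$. For a vertex $v$, $\mathcal{F}(v)=\{F_e: e \text{ is an edge incident with } v\}$. With $e_i=v_{i-1}v_i$ ($1\leqslant i\leqslant l$), the path $P=v_0v_1\cdots v_l$ ($l\geqslant 3$) is of type-II if for every $1\leqslant i\leqslant l-2$: $F_{e_i}\notin\mathcal{F}(v_{i+2})$ and $F_{e_{i+2}}\notin\mathcal{F}(v_{i-1})$. *)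

theory Defs
  imports Main
begin

definition graph :: "'a set \<Rightarrow> ('a \<Rightarrow> 'a \<Rightarrow> bool) \<Rightarrow> bool" where
  "graph V E \<longleftrightarrow> (\<forall>u v. E u v \<longrightarrow> u \<in> V \<and> v \<in> V) \<and> (\<forall>u v. E u v \<longrightarrow> E v u) \<and> (\<forall>u. \<not> E u u)"

definition is_walk :: "'a set \<Rightarrow> ('a \<Rightarrow> 'a \<Rightarrow> bool) \<Rightarrow> 'a list \<Rightarrow> bool" where
  "is_walk V E xs \<longleftrightarrow> xs \<noteq> [] \<and> set xs \<subseteq> V \<and> (\<forall>i. Suc i < length xs \<longrightarrow> E (xs ! i) (xs ! Suc i))"

text \<open>Paths: walks with pairwise distinct vertices; the length of a path is length xs - 1.\<close>
definition is_path :: "'a set \<Rightarrow> ('a \<Rightarrow> 'a \<Rightarrow> bool) \<Rightarrow> 'a list \<Rightarrow> bool" where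
  "is_path V E xs \<longleftrightarrow> is_walk V E xs \<and> distinct xs"

definition connected_graph :: "'a set \<Rightarrow> ('a \<Rightarrow> 'a \<Rightarrow> bool) \<Rightarrow> bool" where
  "connected_graph V E \<longleftrightarrow> (\<forall>u\<in>V. \<forall>v\<in>V. \<exists>xs. is_walk V E xs \<and> hd xs = u \<and> last xs = v)"

definition gdist :: "'a set \<Rightarrow> ('a \<Rightarrow> 'a \<Rightarrow> bool) \<Rightarrow> 'a \<Rightarrow> 'a \<Rightarrow> nat" where
  "gdist V E u v = (LEAST n. \<exists>xs. is_walk V E xs \<and> hd xs = u \<and> last xs = v \<and> length xs = Suc n)"

definition shortest_path :: "'a set \<Rightarrow> ('a \<Rightarrow> 'a \<Rightarrow> bool) \<Rightarrow> 'a \<Rightarrow> 'a \<Rightarrow> 'a list \<Rightarrow> bool" where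
  "shortest_path V E u v xs \<longleftrightarrow> is_path V E xs \<and> hd xs = u \<and> last xs = v \<and> length xs = Suc (gdist V E u v)"

text \<open>Partial cube: connected graph isometrically embeddable into a hypercube
  (vertices = finite subsets of an index set, here nat; distance = size of symmetric difference).\<close>
definition partial_cube :: "'a set \<Rightarrow> ('a \<Rightarrow> 'a \<Rightarrow> bool) \<Rightarrow> bool" where
  "partial_cube V E \<longleftrightarrow> graph V E \<and> connected_graph V E \<and>
     (\<exists>f :: 'a \<Rightarrow> nat set. (\<forall>v\<in>V. finite (f v)) \<and> inj_on f V \<and>
        (\<forall>u\<in>V. \<forall>v\<in>V. gdist V E u v = card ((f u - f v) \<union> (f v - f u))))"

definition convex_sub :: "'a set \<Rightarrow> ('a \<Rightarrow> 'a \<Rightarrow> bool) \<Rightarrow> 'a set \<Rightarrow> 'a set set \<Rightarrow> bool" where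
  "convex_sub V E VH EH \<longleftrightarrow> (\<forall>u\<in>VH. \<forall>v\<in>VH. \<forall>xs. shortest_path V E u v xs \<longrightarrow>
      set xs \<subseteq> VH \<and> (\<forall>i. Suc i < length xs \<longrightarrow> {xs ! i, xs ! Suc i} \<in> EH))"

definition is_cycle :: "'a set \<Rightarrow> ('a \<Rightarrow> 'a \<Rightarrow> bool) \<Rightarrow> 'a list \<Rightarrow> bool" where
  "is_cycle V E cs \<longleftrightarrow> length cs \<ge> 3 \<and> distinct cs \<and> set cs \<subseteq> V \<and>
     (\<forall>i < length cs. E (cs ! i) (cs ! (Suc i mod length cs)))"

definition cycle_edges :: "'a list \<Rightarrow> 'a set set" where
  "cycle_edges cs = {{cs ! i, cs ! (Suc i mod length cs)} | i. i < length cs}"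

definition convex_cycle :: "'a set \<Rightarrow> ('a \<Rightarrow> 'a \<Rightarrow> bool) \<Rightarrow> 'a list \<Rightarrow> bool" where
  "convex_cycle V E cs \<longleftrightarrow> is_cycle V E cs \<and> convex_sub V E (set cs) (cycle_edges cs)"

definition Theta :: "'a set \<Rightarrow> ('a \<Rightarrow> 'a \<Rightarrow> bool) \<Rightarrow> 'a \<times> 'a \<Rightarrow> 'a \<times> 'a \<Rightarrow> bool" where
  "Theta V E e f \<longleftrightarrow> (case e of (u, v) \<Rightarrow> case f of (x, y) \<Rightarrow>
      gdist V E u x + gdist V E v y \<noteq> gdist V E u y + gdist V E v x)"

text \<open>Theta-class F_e of an edge e (containing both orientations of each edge).\<close>
definition Fclass :: "'a set \<Rightarrow> ('a \<Rightarrow> 'a \<Rightarrow> bool) \<Rightarrow> 'a \<times> 'a \<Rightarrow> ('a \<times> 'a) set" where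
  "Fclass V E e = {(x, y). E x y \<and> Theta V E e (x, y)}"

definition Fvert :: "'a set \<Rightarrow> ('a \<Rightarrow> 'a \<Rightarrow> bool) \<Rightarrow> 'a \<Rightarrow> ('a \<times> 'a) set set" where
  "Fvert V E v = {Fclass V E (v, w) | w. E v w}"

text \<open>Type-II path P = v_0 ... v_l (l >= 3), e_i = v_{i-1} v_i; list index k holds v_k.\<close>
definition type_II :: "'a set \<Rightarrow> ('a \<Rightarrow> 'a \<Rightarrow> bool) \<Rightarrow> 'a list \<Rightarrow> bool" where
  "type_II V E p \<longleftrightarrow> is_path V E p \<and> length p \<ge> 4 \<and>
     (\<forall>i. 1 \<le> i \<and> i \<le> length p - 3 \<longrightarrow>
        Fclass V E (p ! (i - 1), p ! i) \<notin> Fvert V E (p ! (i + 2)) \<and>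
        Fclass V E (p ! (i + 1), p ! (i + 2)) \<notin> Fvert V E (p ! (i - 1)))"

end

(*
  Embed G isometrically into a hypercube, so that vertices are finite sets of coordinates,
  every edge flips one coordinate and two edges are \<Theta>-related iff they flip the same one.
  A path is then a geodesic iff no coordinate is flipped twice. Otherwise it contains a
  "repeat walk": a shortest segment whose first and last edges flip the same coordinate. The
  type-II condition says precisely that no vertex of this walk has a neighbour across the
  coordinate flipped three steps away. By induction on the length, every repeat walk has such
  a neighbour: the first step of a geodesic between its end points either produces a shorter
  repeat walk with a violation that lifts back, or it rotates the walk backwards by one edge;
  iterating the rotation sweeps out a convex cycle of length 2(s - 1) \<ge> 8 (and a walk of
  length 3 closes up a 4-cycle), contradicting that all convex cycles are hexagons.
*)

theory Submission
  imports Defs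
begin

definition symdiff :: "nat set \<Rightarrow> nat set \<Rightarrow> nat set" where
  "symdiff A B = (A - B) \<union> (B - A)"

lemma symdiff_empty[simp]: "symdiff A {} = A"
  by (auto simp: symdiff_def)

lemma symdiff_symdiff_cancel_left[simp]: "symdiff A (symdiff A B) = B"
  by (auto simp: symdiff_def)

lemma symdiff_symdiff_cancel_right[simp]: "symdiff (symdiff A B) B = A"
  by (auto simp: symdiff_def)

lemma symdiff_insert: "x \<notin> S \<Longrightarrow> symdiff (symdiff P S) {x} = symdiff P (insert x S)"
  by (auto simp: symdiff_def)

lemma symdiff_insert_cancel: "x \<notin> S \<Longrightarrow> symdiff (symdiff P (insert x S)) {x} = symdiff P S"
  by (auto simp: symdiff_def)

lemma symdiff_singleton_commute: "symdiff (symdiff X {a}) {b} = symdiff (symdiff X {b}) {a}"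
  by (auto simp: symdiff_def)

lemma symdiff_eq_empty_iff: "symdiff A B = {} \<longleftrightarrow> A = B"
  by (auto simp: symdiff_def)

lemma symdiff_eq_self_empty: "symdiff X S = X \<Longrightarrow> S = {}"
  by (auto simp: symdiff_def)

lemma symdiff_eq_singleton: "symdiff A B = {d} \<Longrightarrow> B = symdiff A {d}"
proof -
  assume a: "symdiff A B = {d}"
  have "B = symdiff A (symdiff A B)" by simp
  then show "B = symdiff A {d}" using a by simp
qed

lemma finite_symdiff: "finite A \<Longrightarrow> finite B \<Longrightarrow> finite (symdiff A B)"
  by (simp add: symdiff_def)

lemma symdiff_triangle: "symdiff A C \<subseteq> symdiff A B \<union> symdiff B C"
  by (auto simp: symdiff_def)

lemma card_symdiff_singleton:
  assumes "finite S"
  shows "int (card (symdiff S {x})) = int (card S) + (if x \<in> S then -1 else 1)"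
proof (cases "x \<in> S")
  case True
  then have "symdiff S {x} = S - {x}" by (auto simp: symdiff_def)
  moreover have "1 \<le> card S" using True assms by (metis One_nat_def Suc_leI card_gt_0_iff empty_iff)
  ultimately show ?thesis using True assms by (simp add: card_Diff_singleton of_nat_diff)
next
  case False
  then have "symdiff S {x} = insert x S" by (auto simp: symdiff_def)
  then show ?thesis using False assms by simp
qed

lemma card_symdiff_symdiff_iff:
  assumes "finite D"
  shows "card D + card (symdiff (symdiff D {\<alpha>}) {\<beta>}) \<noteq> card (symdiff D {\<beta>}) + card (symdiff D {\<alpha>})
    \<longleftrightarrow> \<alpha> = \<beta>"
proof -
  have "finite (symdiff D {\<alpha>})" using assms by (simp add: finite_symdiff)
  then have "int (card (symdiff (symdiff D {\<alpha>}) {\<beta>}))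
      = int (card (symdiff D {\<alpha>})) + (if \<beta> \<in> symdiff D {\<alpha>} then -1 else 1)"
    by (rule card_symdiff_singleton)
  moreover have "\<beta> \<in> symdiff D {\<alpha>} \<longleftrightarrow> (if \<alpha> = \<beta> then \<alpha> \<notin> D else \<beta> \<in> D)"
    by (auto simp: symdiff_def)
  ultimately show ?thesis
    using card_symdiff_singleton[OF assms, of \<alpha>] card_symdiff_singleton[OF assms, of \<beta>]
    by (auto split: if_splits)
qed

lemma card_symdiff_decrease:
  assumes "finite X" "finite Z" "card (symdiff (symdiff X {d}) Z) < card (symdiff X Z)"
  shows "d \<in> symdiff X Z"
proof (rule ccontr)
  assume "d \<notin> symdiff X Z"
  then have "symdiff (symdiff X {d}) Z = insert d (symdiff X Z)" by (auto simp: symdiff_def)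
  then have "card (symdiff (symdiff X {d}) Z) = Suc (card (symdiff X Z))"
    using \<open>d \<notin> symdiff X Z\<close> finite_symdiff[OF assms(1,2)] by simp
  then show False using assms(3) by simp
qed

section \<open>Walks as sequences of coordinate flips\<close>

fun flips :: "nat set \<Rightarrow> (nat \<Rightarrow> nat) \<Rightarrow> nat \<Rightarrow> nat set" where
  "flips X g 0 = X"
| "flips X g (Suc k) = symdiff (flips X g k) {g k}"

lemma flips_add_inj_on:
  assumes "inj_on g {a..<a+k}"
  shows "flips X g (a+k) = symdiff (flips X g a) (g ` {a..<a+k})"
  using assms
proof (induction k)
  case 0
  then show ?case by simp
next
  case (Suc k)
  have inj: "inj_on g {a..<a+k}" using Suc.prems by (rule inj_on_subset) simp
  have nin: "g (a+k) \<notin> g ` {a..<a+k}" using inj_on_image_mem_iff[OF Suc.prems] by simp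
  have im: "g ` {a..<a+Suc k} = insert (g (a+k)) (g ` {a..<a+k})"
    by (simp add: atLeastLessThanSuc)
  have "flips X g (a + Suc k) = symdiff (flips X g (a+k)) {g (a+k)}" by simp
  also have "\<dots> = symdiff (symdiff (flips X g a) (g ` {a..<a+k})) {g (a+k)}" using Suc.IH[OF inj] by simp
  also have "\<dots> = symdiff (flips X g a) (g ` {a..<a+Suc k})" using symdiff_insert[OF nin] im by simp
  finally show ?case .
qed

lemma flips_add: "flips X g (a + k) = flips (flips X g a) (\<lambda>i. g (i + a)) k"
  by (induction k) (auto simp: add.commute)

lemma flips_cong: "(\<forall>i<k. g i = g' i) \<Longrightarrow> flips X g k = flips X g' k"
  by (induction k) auto

lemma flips_case_nat: "flips (symdiff X {d}) (case_nat d g) (Suc k) = flips X g k"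
  by (induction k) auto

lemma inj_on_case_nat_Suc: "inj_on g A \<Longrightarrow> inj_on (case_nat d g) (Suc ` A)"
  by (auto simp: inj_on_def)

lemma inj_on_case_nat_insert_0: "inj_on g A \<Longrightarrow> d \<notin> g ` A \<Longrightarrow> inj_on (case_nat d g) (insert 0 (Suc ` A))"
  by (auto simp: inj_on_def)

lemma atLeast0_lessThan_Suc_insert: "{0..<Suc m} = insert 0 (Suc ` {0..<m})"
  using lessThan_Suc_eq_insert_0[of m] by (simp add: atLeast0LessThan)

lemma inj_on_shift: "inj_on (g::nat\<Rightarrow>nat) {a..<a+m} \<Longrightarrow> inj_on (\<lambda>i. g (i + a)) {0..<m}"
proof (rule inj_onI)
  fix x y assume inj: "inj_on g {a..<a+m}" and x: "x \<in> {0..<m}" and y: "y \<in> {0..<m}"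
    and e: "g (x + a) = g (y + a)"
  have "x + a = y + a" by (rule inj_onD[OF inj e]) (use x y in auto)
  then show "x = y" by simp
qed

lemma inj_on_mod_interval: "inj_on (\<lambda>x. x mod n) {k..<k+(n::nat)}"
proof (rule inj_onI)
  fix x y assume x: "x \<in> {k..<k+n}" and y: "y \<in> {k..<k+n}" and e: "x mod n = y mod n"
  show "x = y"
  proof (rule ccontr)
    assume ne: "x \<noteq> y"
    { fix a b :: nat assume ab: "a < b" "a \<in> {k..<k+n}" "b \<in> {k..<k+n}" "a mod n = b mod n"
      then have "n dvd b - a" using mod_eq_dvd_iff_nat[of a b n] by simp
      moreover have "0 < b - a" "b - a < n" using ab by auto
      ultimately have False using nat_dvd_not_less by blast }
    then show False using x y e ne by (metis linorder_neqE_nat)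
  qed
qed

lemma mod_image_interval:
  assumes "0 < (n::nat)"
  shows "(\<lambda>x. x mod n) ` {k..<k+n} = {0..<n}"
proof -
  have sub: "(\<lambda>x. x mod n) ` {k..<k+n} \<subseteq> {0..<n}" using assms by auto
  have "card ((\<lambda>x. x mod n) ` {k..<k+n}) = n" using card_image[OF inj_on_mod_interval] by simp
  then show ?thesis using card_subset_eq[OF _ sub] by simp
qed

lemma periodic_add: "\<forall>k. (h::nat\<Rightarrow>nat) k = h (k mod n) \<Longrightarrow> h (a + n) = h (a::nat)"
  by (metis mod_add_self2)

lemma periodic_image_interval:
  assumes n0: "0 < (n::nat)" and hp: "\<forall>k. (h::nat\<Rightarrow>nat) k = h (k mod n)"
  shows "h ` {k..<k+n} = h ` {0..<n}"
proof -
  have "h ` {k..<k+n} = (\<lambda>x. h (x mod n)) ` {k..<k+n}"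
    by (rule image_cong[OF refl]) (use hp in blast)
  also have "\<dots> = h ` ((\<lambda>x. x mod n) ` {k..<k+n})" by (simp add: image_image)
  also have "\<dots> = h ` {0..<n}" using mod_image_interval[OF n0, of k] by simp
  finally show ?thesis .
qed

lemma periodic_inj_on_interval:
  assumes n0: "0 < (n::nat)" and hp: "\<forall>k. (h::nat\<Rightarrow>nat) k = h (k mod n)" and inj: "inj_on h {0..<n}"
  shows "inj_on h {k..<k+n}"
proof (rule inj_onI)
  fix x y assume x: "x \<in> {k..<k+n}" and y: "y \<in> {k..<k+n}" and e: "h x = h y"
  have "h (x mod n) = h (y mod n)" using e hp by metis
  then have "x mod n = y mod n" by (rule inj_onD[OF inj]) (use n0 in auto)
  then show "x = y" using inj_onD[OF inj_on_mod_interval _ x y] by simp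
qed

lemma flips_periodic_period:
  assumes n0: "0 < (n::nat)" and hp: "\<forall>k. (h::nat\<Rightarrow>nat) k = h (k mod n)" and inj: "inj_on h {0..<n}"
  shows "flips X h (k + n) = symdiff (flips X h k) (h ` {0..<n})"
  using flips_add_inj_on[OF periodic_inj_on_interval[OF n0 hp inj, of k], of X] periodic_image_interval[OF n0 hp, of k] by simp

lemma flips_periodic_double_period:
  assumes n0: "0 < (n::nat)" and hp: "\<forall>k. (h::nat\<Rightarrow>nat) k = h (k mod n)" and inj: "inj_on h {0..<n}"
  shows "flips X h (k + 2*n) = flips X h k"
proof -
  have "flips X h (k + 2*n) = flips X h ((k + n) + n)" by (simp add: mult_2 add.assoc)
  also have "\<dots> = flips X h k" using flips_periodic_period[OF assms, of X "k+n"] flips_periodic_period[OF assms, of X k] by simp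
  finally show ?thesis .
qed

lemma flips_periodic_mod:
  assumes n0: "0 < (n::nat)" and hp: "\<forall>k. (h::nat\<Rightarrow>nat) k = h (k mod n)" and inj: "inj_on h {0..<n}"
  shows "flips X h k = flips X h (k mod (2*n))"
proof -
  have Pq: "flips X h (r + q*(2*n)) = flips X h r" for r q
  proof (induction q)
    case 0 then show ?case by simp
  next
    case (Suc q)
    have "flips X h (r + Suc q * (2*n)) = flips X h ((r + q*(2*n)) + 2*n)"
      by (rule arg_cong[where f="flips X h"]) simp
    also have "\<dots> = flips X h (r + q*(2*n))" by (rule flips_periodic_double_period[OF assms])
    finally show ?case using Suc.IH by simp
  qed
  show ?thesis using Pq[of "k mod (2*n)" "k div (2*n)"] by (simp only: mod_div_mult_eq)
qed

lemma flips_periodic_neq: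
  assumes n0: "0 < (n::nat)" and hp: "\<forall>k. (h::nat\<Rightarrow>nat) k = h (k mod n)" and inj: "inj_on h {0..<n}"
    and k: "0 < k" "k \<le> n"
  shows "flips X h (a + k) \<noteq> flips X h a"
proof
  assume e: "flips X h (a + k) = flips X h a"
  have "inj_on h {a..<a+k}" by (rule inj_on_subset[OF periodic_inj_on_interval[OF n0 hp inj, of a]]) (use k in auto)
  then have "flips X h (a + k) = symdiff (flips X h a) (h ` {a..<a+k})" by (rule flips_add_inj_on)
  then have "h ` {a..<a+k} = {}" using e symdiff_eq_self_empty by metis
  then show False using k by auto
qed

lemma flips_periodic_subset:
  assumes hp: "\<forall>k. (h::nat\<Rightarrow>nat) k = h (k mod n)" and n0: "0 < (n::nat)"
  shows "symdiff X (flips X h k) \<subseteq> h ` {0..<n}"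
proof (induction k)
  case 0 then show ?case by (simp add: symdiff_def)
next
  case (Suc k)
  have "h k \<in> h ` {0..<n}" using hp n0 by (metis atLeastLessThan_iff image_eqI le0 mod_less_divisor)
  moreover have "symdiff X (flips X h (Suc k)) \<subseteq> symdiff X (flips X h k) \<union> {h k}" by (auto simp: symdiff_def)
  ultimately show ?case using Suc.IH by blast
qed

lemma flips_periodic_pred:
  assumes n0: "0 < (n::nat)" and hp: "\<forall>k. (h::nat\<Rightarrow>nat) k = h (k mod n)" and inj: "inj_on h {0..<n}"
  shows "flips X h (k + 2*n - 1) = symdiff (flips X h k) {h (k + n - 1)}"
proof -
  define m where "m = k + 2*n - 1"
  have "flips X h (Suc m) = flips X h k"
    using flips_periodic_double_period[OF assms, of X k] n0 by (simp add: m_def)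
  then have "flips X h m = symdiff (flips X h k) {h m}" by (metis flips.simps(2) symdiff_symdiff_cancel_right)
  moreover have "m = (k + n - 1) + n" using n0 by (simp add: m_def)
  then have "h m = h (k + n - 1)" using periodic_add[OF hp] by simp
  ultimately show ?thesis by (simp add: m_def)
qed

lemma flips_periodic_inj_on:
  assumes n0: "0 < (n::nat)" and hp: "\<forall>k. (h::nat\<Rightarrow>nat) k = h (k mod n)" and inj: "inj_on h {0..<n}"
  shows "inj_on (flips X h) {0..<2*n}"
proof (rule linorder_inj_onI')
  fix a b assume ab: "a \<in> {0..<2*n}" "b \<in> {0..<2*n}" "a < b"
  show "flips X h a \<noteq> flips X h b"
  proof (cases "b - a \<le> n")
    case True
    then show ?thesis using flips_periodic_neq[OF assms, of "b - a" X a] ab by simp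
  next
    case False
    have "flips X h (b + (a + 2*n - b)) = flips X h a"
      using flips_periodic_double_period[OF assms, of X a] ab by simp
    moreover have "0 < a + 2*n - b" "a + 2*n - b \<le> n" using ab False by auto
    ultimately show ?thesis using flips_periodic_neq[OF assms, of "a + 2*n - b" X b] by metis
  qed
qed

section \<open>Repeat walks in a set of vertices\<close>

locale flip_set =
  fixes W :: "nat set set"
begin

text \<open>\<open>W\<close> stands for the image of a partial cube and a walk is \<open>v\<^sub>k = flips X g k\<close>, so that its
  edge \<open>e\<^sub>i\<close> flips \<open>g (i - 1)\<close>; \<open>violation X g j\<close> says that the type-II condition fails at \<open>i = j\<close>.\<close>

definition repeat_walk :: "nat set \<Rightarrow> (nat \<Rightarrow> nat) \<Rightarrow> nat \<Rightarrow> bool" where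
  "repeat_walk X g s \<longleftrightarrow> 3 \<le> s \<and> g 0 = g (s-1) \<and> inj_on g {0..<s-1} \<and> inj_on g {1..<s}
     \<and> (\<forall>k\<le>s. flips X g k \<in> W)"

definition violation :: "nat set \<Rightarrow> (nat \<Rightarrow> nat) \<Rightarrow> nat \<Rightarrow> bool" where
  "violation X g j \<longleftrightarrow> symdiff (flips X g (j+2)) {g (j-1)} \<in> W \<or> symdiff (flips X g (j-1)) {g (j+1)} \<in> W"

definition violation_free :: "nat set \<Rightarrow> (nat \<Rightarrow> nat) \<Rightarrow> nat \<Rightarrow> bool" where
  "violation_free X g s \<longleftrightarrow> (\<forall>j. 1 \<le> j \<and> j \<le> s-2 \<longrightarrow> \<not> violation X g j)"

definition repeat_walks_violate :: "nat \<Rightarrow> bool" where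
  "repeat_walks_violate s \<longleftrightarrow> (\<forall>X g. repeat_walk X g s \<longrightarrow> (\<exists>j. 2 \<le> j \<and> j \<le> s-2 \<and> violation X g j))"

lemma repeat_walk_cong:
  assumes "\<forall>i<s. g i = h i"
  shows "repeat_walk X g s = repeat_walk X h s"
proof -
  have a: "3 \<le> s \<Longrightarrow> g 0 = h 0 \<and> g (s-1) = h (s-1)" using assms by auto
  have b: "inj_on g {0..<s-1} = inj_on h {0..<s-1}" by (rule inj_on_cong) (use assms in auto)
  have c: "inj_on g {1..<s} = inj_on h {1..<s}" by (rule inj_on_cong) (use assms in auto)
  have d: "k \<le> s \<Longrightarrow> flips X g k = flips X h k" for k by (rule flips_cong) (use assms in auto)
  show ?thesis unfolding repeat_walk_def using a b c d by auto
qed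

lemma violation_cong:
  assumes "\<forall>i<s. g i = h i" "j \<le> s-2" "3 \<le> s"
  shows "violation X g j = violation X h j"
proof -
  have "flips X g (j+2) = flips X h (j+2)" by (rule flips_cong) (use assms in auto)
  moreover have "flips X g (j-1) = flips X h (j-1)" by (rule flips_cong) (use assms in auto)
  moreover have "g (j-1) = h (j-1)" "g (j+1) = h (j+1)" using assms by auto
  ultimately show ?thesis unfolding violation_def by simp
qed

lemma violation_free_cong:
  assumes "\<forall>i<s. g i = h i" "3 \<le> s"
  shows "violation_free X g s = violation_free X h s"
  unfolding violation_free_def using violation_cong[OF assms(1) _ assms(2)] by auto

lemma violation_case_nat:
  assumes "2 \<le> j"
  shows "violation (symdiff X {d}) (case_nat d g) j = violation X g (j-1)"
proof -
  have e1: "flips (symdiff X {d}) (case_nat d g) (j+2) = flips X g (j-1+2)"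
    using flips_case_nat[of X d g "j+1"] assms by (simp del: flips.simps add: numeral_2_eq_2)
  have jj: "j - 1 = Suc (j - 2)" "j - 1 - 1 = j - 2" using assms by arith+
  have e2: "flips (symdiff X {d}) (case_nat d g) (j-1) = flips X g (j-1-1)"
    unfolding jj(2) unfolding jj(1) using flips_case_nat[of X d g "j-2"] .
  have e3: "case_nat d g (j-1) = g (j-1-1)" using jj by simp
  have e4: "case_nat d g (j+1) = g (j-1+1)" using assms by simp
  show ?thesis unfolding violation_def e1 e2 e3 e4 ..
qed

lemma violation_shift:
  assumes "1 \<le> j"
  shows "violation (flips X g a) (\<lambda>i. g (i + a)) j = violation X g (j + a)"
proof -
  have e1: "flips (flips X g a) (\<lambda>i. g (i + a)) (j+2) = flips X g (j+a+2)"
    using flips_add[of X g a "j+2"] by (simp del: flips.simps add: ac_simps)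
  have e2: "flips (flips X g a) (\<lambda>i. g (i + a)) (j-1) = flips X g (j+a-1)"
    using flips_add[of X g a "j-1"] assms by (simp del: flips.simps add: ac_simps)
  have e3: "j - 1 + a = j + a - 1" "j + 1 + a = j + a + 1" using assms by auto
  show ?thesis unfolding violation_def e1 e2 e3 ..
qed

lemma repeat_walk_end:
  assumes "repeat_walk X g s"
  shows "flips X g s = symdiff X (g ` {1..<s-1})"
proof -
  have s3: "3 \<le> s" and g0: "g 0 = g (s-1)" and inj: "inj_on g {0..<s-1}"
    using assms by (auto simp: repeat_walk_def)
  have a: "flips X g (s-1) = symdiff X (g ` {0..<s-1})" using flips_add_inj_on[of g 0 "s-1" X] inj by simp
  have im: "g ` {0..<s-1} = insert (g 0) (g ` {1..<s-1})"
  proof -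
    have "{0..<s-1} = insert 0 {1..<s-1}" using s3 by auto
    then show ?thesis by simp
  qed
  have nin: "g 0 \<notin> g ` {1..<s-1}"
  proof
    assume "g 0 \<in> g ` {1..<s-1}"
    then obtain x where x: "x \<in> {1..<s-1}" "g 0 = g x" by auto
    have "0 = x" by (rule inj_onD[OF inj x(2)]) (use x(1) s3 in auto)
    then show False using x by auto
  qed
  have "flips X g s = symdiff (flips X g (s-1)) {g (s-1)}" using s3 by (cases s) auto
  then show ?thesis using a im nin g0 symdiff_insert_cancel by simp
qed

lemma repeat_walk_not_closed: "repeat_walk X g s \<Longrightarrow> X \<noteq> flips X g s"
proof
  assume b: "repeat_walk X g s" and e: "X = flips X g s"
  then have "symdiff X (g ` {1..<s-1}) = X" using repeat_walk_end[OF b] by simp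
  then have "g ` {1..<s-1} = {}" by (rule symdiff_eq_self_empty)
  moreover have "3 \<le> s" using b by (simp add: repeat_walk_def)
  ultimately show False by auto
qed

lemma repeat_walk_case_nat:
  assumes m2: "2 \<le> m" and dm: "d = h (m-1)" and inj: "inj_on h {0..<m}"
    and nin: "d \<notin> h ` {0..<m-1}" and W: "\<forall>k\<le>m. flips Y h k \<in> W" and w: "symdiff Y {d} \<in> W"
  shows "repeat_walk (symdiff Y {d}) (case_nat d h) (m+1)"
proof -
  have inj0: "inj_on h {0..<m-1}" by (rule inj_on_subset[OF inj]) auto
  have eq: "m + 1 - 1 = Suc (m - 1)" using m2 by simp
  have eq2: "{0..<m+1-1} = insert 0 (Suc ` {0..<m-1})" unfolding eq by (rule atLeast0_lessThan_Suc_insert)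
  have i0: "inj_on (case_nat d h) {0..<m+1-1}" unfolding eq2 by (rule inj_on_case_nat_insert_0[OF inj0 nin])
  have eq3: "{1..<m+1} = Suc ` {0..<m}" using image_Suc_atLeastLessThan[of 0 m] by simp
  have i1: "inj_on (case_nat d h) {1..<m+1}" unfolding eq3 by (rule inj_on_case_nat_Suc[OF inj])
  have ww: "\<forall>k\<le>m+1. flips (symdiff Y {d}) (case_nat d h) k \<in> W"
  proof (intro allI impI)
    fix k assume k: "k \<le> m+1"
    show "flips (symdiff Y {d}) (case_nat d h) k \<in> W"
    proof (cases k)
      case 0 then show ?thesis using w by simp
    next
      case (Suc k')
      then have "flips (symdiff Y {d}) (case_nat d h) k = flips Y h k'" using flips_case_nat by simp
      moreover have "k' \<le> m" using k Suc by auto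
      ultimately show ?thesis using W by simp
    qed
  qed
  have e: "case_nat d h (m + 1 - 1) = d" using dm m2 by (cases m) auto
  show ?thesis unfolding repeat_walk_def using i0 i1 ww m2 e by simp
qed

lemma repeat_walk_truncate:
  assumes b: "repeat_walk X g s" and q1: "1 \<le> q" and qs: "q < s - 1" and w: "symdiff X {g q} \<in> W"
  shows "repeat_walk (symdiff X {g q}) (case_nat (g q) g) (q + 2)"
proof -
  have inj: "inj_on g {0..<s-1}" and W: "\<forall>k\<le>s. flips X g k \<in> W" using b by (auto simp: repeat_walk_def)
  have injq: "inj_on g {0..<q+1}" by (rule inj_on_subset[OF inj]) (use qs in auto)
  have "g q \<notin> g ` {0..<q}" using inj_on_image_mem_iff[OF injq] by simp
  then show ?thesis
    using repeat_walk_case_nat[of "q + 1" "g q" g X] q1 qs injq w W by simp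
qed

end

text \<open>The two properties of partial cubes used below: some neighbour of \<open>X\<close> lies on a geodesic to
  \<open>Z\<close>, and a closed walk with period-\<open>n\<close> coordinates whose vertices have no neighbours across these
  coordinates except the two cycle neighbours is a convex \<open>2n\<close>-cycle, hence a hexagon.\<close>

locale flip_system = flip_set +
  assumes geodesic_step: "X \<in> W \<Longrightarrow> Z \<in> W \<Longrightarrow> X \<noteq> Z \<Longrightarrow> \<exists>d \<in> symdiff X Z. symdiff X {d} \<in> W"
  and hexagonal_flip_cycles: "\<lbrakk> 2 \<le> n; \<forall>k. h k = h (k mod n); inj_on h {0..<n}; \<forall>k. flips X h k \<in> W;
             \<forall>j d. d \<in> h ` {0..<n} \<longrightarrow> symdiff (flips X h j) {d} \<in> W \<longrightarrow> d = h j \<or> d = h (j + n - 1) \<rbrakk>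
             \<Longrightarrow> n = 3"
begin

lemma no_square:
  assumes "X \<in> W" "a \<noteq> b" "symdiff X {a} \<in> W" "symdiff X {b} \<in> W" "symdiff (symdiff X {a}) {b} \<in> W"
  shows False
proof -
  define h where "h k = (if even k then a else b)" for k :: nat
  have hp: "\<forall>k. h k = h (k mod 2)" by (simp add: h_def)
  have inj: "inj_on h {0..<2}" using assms(2) by (auto simp: h_def inj_on_def less_Suc_eq numeral_2_eq_2)
  have "symdiff (symdiff (symdiff X {a}) {b}) {a} = symdiff X {b}" by (auto simp: symdiff_def)
  then have w: "flips X h 0 \<in> W" "flips X h 1 \<in> W" "flips X h 2 \<in> W" "flips X h 3 \<in> W"
    using assms by (simp_all add: h_def eval_nat_numeral)
  have "\<forall>k. flips X h k \<in> W"
  proof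
    fix k
    have "k mod 4 < (4::nat)" by simp
    then consider "k mod 4 = 0" | "k mod 4 = 1" | "k mod 4 = 2" | "k mod 4 = 3" by linarith
    then have "flips X h (k mod 4) \<in> W" using w by cases simp_all
    moreover have "flips X h k = flips X h (k mod (2 * 2))" by (rule flips_periodic_mod[OF _ hp inj]) simp
    ultimately show "flips X h k \<in> W" by simp
  qed
  moreover have "\<forall>j d. d \<in> h ` {0..<2} \<longrightarrow> symdiff (flips X h j) {d} \<in> W \<longrightarrow> d = h j \<or> d = h (j + 2 - 1)"
  proof (intro allI impI)
    fix j d assume "d \<in> h ` {0..<2}"
    then have "d \<in> {a, b}" by (auto simp: h_def)
    moreover have "{h j, h (j + 2 - 1)} = {a, b}" by (auto simp: h_def)
    ultimately show "d = h j \<or> d = h (j + 2 - 1)" by blast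
  qed
  ultimately have "(2::nat) = 3" using hexagonal_flip_cycles[OF _ hp inj] by simp
  then show False by simp
qed

lemma no_repeat_walk_3: "repeat_walk X g 3 \<Longrightarrow> False"
proof -
  assume b: "repeat_walk X g 3"
  then have g02: "g 0 = g 2" and inj: "inj_on g {0..<2}" and W: "\<forall>k\<le>3. flips X g k \<in> W"
    by (auto simp: repeat_walk_def)
  have ne: "g 0 \<noteq> g 1" using inj_onD[OF inj, of 0 1] by auto
  have p0: "flips X g 0 = X" and p1: "flips X g 1 = symdiff X {g 0}" and p2: "flips X g 2 = symdiff (symdiff X {g 0}) {g 1}"
    by (simp_all add: eval_nat_numeral)
  have "flips X g 3 = symdiff (symdiff (symdiff X {g 0}) {g 1}) {g 2}" by (simp add: eval_nat_numeral)
  also have "\<dots> = symdiff X {g 1}" unfolding g02[symmetric] by (auto simp: symdiff_def)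
  finally have p3: "flips X g 3 = symdiff X {g 1}" .
  have w: "flips X g 0 \<in> W" "flips X g 1 \<in> W" "flips X g 2 \<in> W" "flips X g 3 \<in> W"
    using W[rule_format, of 0] W[rule_format, of 1] W[rule_format, of 2] W[rule_format, of 3] by (simp_all del: flips.simps)
  show False
    by (rule no_square[OF _ ne, of X]) (use w in \<open>simp_all only: p0 p1 p2 p3\<close>)
qed

text \<open>A violation at \<open>1\<close> may instead give \<open>v\<^sub>0\<close> a neighbour across \<open>g 2\<close>; then the first step of a
  geodesic from it to \<open>v\<^sub>3\<close> either closes a square at \<open>v\<^sub>0\<close> or is the required neighbour of \<open>v\<^sub>3\<close>.\<close>

lemma violation_at_1_flip:
  assumes b: "repeat_walk X g s" and s5: "5 \<le> s" and v1: "violation X g 1"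
  shows "symdiff (flips X g 3) {g 0} \<in> W"
proof -
  have inj: "inj_on g {0..<s-1}" and W: "\<forall>k\<le>s. flips X g k \<in> W"
    using b by (auto simp: repeat_walk_def)
  have mem: "0 \<in> {0..<s-1}" "1 \<in> {0..<s-1}" "2 \<in> {0..<s-1}" using s5 by auto
  have d01: "g 0 \<noteq> g 1" using inj_onD[OF inj _ mem(1) mem(2)] by auto
  have d02: "g 0 \<noteq> g 2" using inj_onD[OF inj _ mem(1) mem(3)] by auto
  have d12: "g 1 \<noteq> g 2" using inj_onD[OF inj _ mem(2) mem(3)] by auto
  have p3: "flips X g 3 = symdiff (symdiff (symdiff X {g 0}) {g 1}) {g 2}" by (simp add: eval_nat_numeral)
  have wX: "X \<in> W" using W[rule_format, of 0] by simp
  have w1: "symdiff X {g 0} \<in> W" using W[rule_format, of 1] s5 by simp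
  have w3: "flips X g 3 \<in> W" using W[rule_format, of 3] s5 by (simp del: flips.simps)
  have v1': "symdiff (flips X g 3) {g 0} \<in> W \<or> symdiff X {g 2} \<in> W"
    using v1 unfolding violation_def by (simp del: flips.simps add: flips.simps(1) numeral_3_eq_3 numeral_2_eq_2)
  show ?thesis
  proof (cases "symdiff X {g 2} \<in> W")
    case False then show ?thesis using v1' by simp
  next
    case True
    have sdY: "symdiff (symdiff X {g 2}) (flips X g 3) = {g 0, g 1}"
      unfolding p3 symdiff_def using d01 d02 d12 by auto
    have ne: "symdiff X {g 2} \<noteq> flips X g 3"
    proof
      assume "symdiff X {g 2} = flips X g 3"
      then have "symdiff (symdiff X {g 2}) (flips X g 3) = {}" by (simp add: symdiff_eq_empty_iff)
      then show False using sdY by simp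
    qed
    obtain d where d: "d \<in> {g 0, g 1}" "symdiff (symdiff X {g 2}) {d} \<in> W"
      using geodesic_step[OF True w3 ne] sdY by auto
    show ?thesis
    proof (cases "d = g 0")
      case True
      then have "symdiff (symdiff X {g 0}) {g 2} \<in> W" using d(2) symdiff_singleton_commute by metis
      then show ?thesis using no_square[OF wX d02 w1 \<open>symdiff X {g 2} \<in> W\<close>] by simp
    next
      case False
      then have "d = g 1" using d(1) by simp
      moreover have "symdiff (symdiff X {g 2}) {g 1} = symdiff (flips X g 3) {g 0}"
        unfolding p3 symdiff_def using d01 d02 d12 by auto
      ultimately show ?thesis using d(2) by simp
    qed
  qed
qed

text \<open>Flipping \<open>g 0\<close> at \<open>v\<^sub>3\<close> cuts off the first three steps and leaves a shorter repeat walk.\<close>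

lemma violation_only_at_1_absurd:
  assumes IH: "\<forall>s'<s. repeat_walks_violate s'" and b: "repeat_walk X g s" and s5: "5 \<le> s"
    and nv: "\<forall>j. 2 \<le> j \<and> j \<le> s-2 \<longrightarrow> \<not> violation X g j" and v1: "violation X g 1"
  shows False
proof -
  have g0: "g 0 = g (s-1)" and inj: "inj_on g {0..<s-1}" and inj1: "inj_on g {1..<s}"
    and W: "\<forall>k\<le>s. flips X g k \<in> W"
    using b by (auto simp: repeat_walk_def)
  have w0: "symdiff (flips X g 3) {g 0} \<in> W" by (rule violation_at_1_flip[OF b s5 v1])
  define h where "h = (\<lambda>i. g (i + 3))"
  have hinj: "inj_on h {0..<s-3}"
    unfolding h_def by (rule inj_on_shift) (rule inj_on_subset[OF inj1], use s5 in auto)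
  have hm: "g 0 = h (s-3-1)" using g0 s5 by (simp add: h_def)
  have hnin: "g 0 \<notin> h ` {0..<s-3-1}"
  proof
    assume "g 0 \<in> h ` {0..<s-3-1}"
    then obtain x where x: "x < s-3-1" "g 0 = g (x+3)" by (auto simp: h_def)
    have "0 = x + 3" by (rule inj_onD[OF inj x(2)]) (use x(1) in auto)
    then show False by simp
  qed
  have hW: "\<forall>k\<le>s-3. flips (flips X g 3) h k \<in> W"
  proof (intro allI impI)
    fix k assume "k \<le> s-3"
    then have "3 + k \<le> s" using s5 by simp
    then have "flips X g (3 + k) \<in> W" using W by blast
    then show "flips (flips X g 3) h k \<in> W" using flips_add[of X g 3 k] by (simp del: flips.simps add: h_def)
  qed
  have shorter: "repeat_walk (symdiff (flips X g 3) {g 0}) (case_nat (g 0) h) (s-3+1)"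
    by (rule repeat_walk_case_nat[OF _ hm hinj hnin hW w0]) (use s5 in simp)
  have "s - 3 + 1 < s" using s5 by simp
  then have "repeat_walks_violate (s-3+1)" using IH by simp
  then obtain j where j: "2 \<le> j" "j \<le> s-3+1-2" "violation (symdiff (flips X g 3) {g 0}) (case_nat (g 0) h) j"
    using shorter unfolding repeat_walks_violate_def by blast
  have "violation (flips X g 3) h (j-1)" using j(3) violation_case_nat[OF j(1)] by simp
  then have "violation X g (j-1+3)" unfolding h_def using violation_shift[of "j-1" X g 3] j(1) by simp
  moreover have "j - 1 + 3 = j + 2" using j(1) by simp
  ultimately have "violation X g (j+2)" by simp
  moreover have "2 \<le> j+2" "j+2 \<le> s-2" using j s5 by auto
  ultimately show False using nv by blast
qed

text \<open>Flipping any other coordinate \<open>g q\<close> at \<open>v\<^sub>0\<close> yields a shorter repeat walk, whose violation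
  would be one of the original walk.\<close>

lemma violation_free_neighbour:
  assumes IH: "\<forall>s'<s. repeat_walks_violate s'" and b: "repeat_walk X g s" and s5: "5 \<le> s"
    and lt: "violation_free X g s" and d: "d \<in> symdiff X (flips X g s)" and w: "symdiff X {d} \<in> W"
  shows "d = g (s - 2)"
proof -
  obtain q where q: "1 \<le> q" "q < s - 1" "d = g q" using d repeat_walk_end[OF b] by auto
  have "q = s - 2"
  proof (rule ccontr)
    assume "q \<noteq> s - 2"
    then have "repeat_walks_violate (q + 2)" using IH q by simp
    moreover have "repeat_walk (symdiff X {g q}) (case_nat (g q) g) (q + 2)"
      using repeat_walk_truncate[OF b q(1,2)] w q(3) by simp
    ultimately obtain j where j: "2 \<le> j" "j \<le> q" "violation (symdiff X {g q}) (case_nat (g q) g) j"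
      unfolding repeat_walks_violate_def by auto
    then have "violation X g (j - 1)" using violation_case_nat[OF j(1)] by simp
    moreover have "1 \<le> j - 1" "j - 1 \<le> s - 2" using j q by auto
    ultimately show False using lt unfolding violation_free_def by blast
  qed
  then show ?thesis using q by simp
qed

lemma violation_free_rotate:
  assumes IH: "\<forall>s'<s. repeat_walks_violate s'" and b: "repeat_walk X g s" and s5: "5 \<le> s"
    and lt: "violation_free X g s"
  shows "repeat_walk (symdiff X {g (s - 2)}) (case_nat (g (s - 2)) g) s
    \<and> violation_free (symdiff X {g (s - 2)}) (case_nat (g (s - 2)) g) s"
proof -
  have "X \<in> W" "flips X g s \<in> W" using b by (auto simp: repeat_walk_def)
  then obtain d where "d \<in> symdiff X (flips X g s)" "symdiff X {d} \<in> W"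
    using geodesic_step repeat_walk_not_closed[OF b] by blast
  then have w: "symdiff X {g (s - 2)} \<in> W" using violation_free_neighbour[OF IH b s5 lt] by auto
  have "repeat_walk (symdiff X {g (s - 2)}) (case_nat (g (s - 2)) g) (s - 2 + 2)"
    by (rule repeat_walk_truncate[OF b _ _ w]) (use s5 in auto)
  moreover have "s - 2 + 2 = s" using s5 by simp
  ultimately have b': "repeat_walk (symdiff X {g (s - 2)}) (case_nat (g (s - 2)) g) s" by metis
  have nv: "\<forall>j. 2 \<le> j \<and> j \<le> s - 2 \<longrightarrow> \<not> violation (symdiff X {g (s - 2)}) (case_nat (g (s - 2)) g) j"
  proof (intro allI impI)
    fix j assume j: "2 \<le> j \<and> j \<le> s - 2"
    have "1 \<le> j - 1" "j - 1 \<le> s - 2" using j by auto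
    then have "\<not> violation X g (j - 1)" using lt unfolding violation_free_def by blast
    then show "\<not> violation (symdiff X {g (s - 2)}) (case_nat (g (s - 2)) g) j"
      using violation_case_nat j by simp
  qed
  have "violation_free (symdiff X {g (s - 2)}) (case_nat (g (s - 2)) g) s"
    unfolding violation_free_def
  proof (intro allI impI)
    fix j assume "1 \<le> j \<and> j \<le> s - 2"
    then consider "j = 1" | "2 \<le> j \<and> j \<le> s - 2" by linarith
    then show "\<not> violation (symdiff X {g (s - 2)}) (case_nat (g (s - 2)) g) j"
      using nv violation_only_at_1_absurd[OF IH b' s5 nv] by cases auto
  qed
  then show ?thesis using b' by simp
qed

lemma violation_free_rotations:
  assumes IH: "\<forall>s'<s. repeat_walks_violate s'" and b: "repeat_walk X h s" and s5: "5 \<le> s"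
    and lt: "violation_free X h s" and hp: "\<forall>k. h k = h (k mod (s - 1))" and r: "r \<le> 2 * (s - 1)"
  shows "repeat_walk (flips X h r) (\<lambda>i. h (i + r)) s \<and> violation_free (flips X h r) (\<lambda>i. h (i + r)) s"
proof -
  define n where "n = s - 1"
  have n0: "0 < n" and hpn: "\<forall>k. h k = h (k mod n)" using s5 hp by (simp_all add: n_def)
  have hinj: "inj_on h {0..<n}" using b by (simp add: repeat_walk_def n_def)
  define T where "T r \<longleftrightarrow> repeat_walk (flips X h r) (\<lambda>i. h (i + r)) s
      \<and> violation_free (flips X h r) (\<lambda>i. h (i + r)) s" for r
  have "T (2 * n)"
  proof -
    have "flips X h (2 * n) = X" using flips_periodic_double_period[OF n0 hpn hinj, of X 0] by simp
    moreover have "(\<lambda>i. h (i + 2 * n)) = h" using periodic_add[OF hpn] by (simp add: mult_2 add.assoc[symmetric])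
    ultimately show ?thesis unfolding T_def using b lt by simp
  qed
  have step: "T (r - 1)" if r1: "1 \<le> r" and Tr: "T r" for r
  proof -
    have br: "repeat_walk (flips X h r) (\<lambda>i. h (i + r)) s"
      and lr: "violation_free (flips X h r) (\<lambda>i. h (i + r)) s"
      using Tr unfolding T_def by auto
    have "s - 2 + r = (r - 1) + n" using r1 s5 by (simp add: n_def)
    then have e1: "h (s - 2 + r) = h (r - 1)" using periodic_add[OF hpn] by simp
    have r_Suc: "r = Suc (r - 1)" using r1 by simp
    have e2: "symdiff (flips X h r) {h (r - 1)} = flips X h (r - 1)" by (subst r_Suc) simp
    have e3: "case_nat (h (r - 1)) (\<lambda>i. h (i + r)) = (\<lambda>i. h (i + (r - 1)))"
    proof
      fix i show "case_nat (h (r - 1)) (\<lambda>i. h (i + r)) i = h (i + (r - 1))"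
        using r1 by (cases i) simp_all
    qed
    show ?thesis
      using violation_free_rotate[OF IH br s5 lr] e1 e2 e3 unfolding T_def by simp
  qed
  have "T (2 * n - i)" if "i \<le> 2 * n" for i
    using that
  proof (induction i)
    case (Suc i)
    then have "T (2 * n - i - 1)" using step[of "2 * n - i"] by simp
    then show ?case by simp
  qed (use \<open>T (2 * n)\<close> in simp)
  from this[of "2 * n - r"] show ?thesis using r by (simp add: T_def n_def)
qed

lemma violation_free_periodic_neighbour:
  assumes IH: "\<forall>s'<s. repeat_walks_violate s'" and b: "repeat_walk X h s" and s5: "5 \<le> s"
    and lt: "violation_free X h s" and hp: "\<forall>k. h k = h (k mod (s - 1))" and r: "r \<le> 2 * (s - 1)"
    and dA: "d \<in> h ` {0..<s - 1}" and dw: "symdiff (flips X h r) {d} \<in> W"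
  shows "d = h r \<or> d = h (r + (s - 2))"
proof (cases "d = h r")
  case False
  define n where "n = s - 1"
  have br: "repeat_walk (flips X h r) (\<lambda>i. h (i + r)) s"
    and lr: "violation_free (flips X h r) (\<lambda>i. h (i + r)) s"
    using violation_free_rotations[OF IH b s5 lt hp r] by auto
  have "(\<lambda>i. i + r) ` {1..<s - 1} = {r + 1..<r + n}"
    by (simp add: n_def add.commute)
  then have "(\<lambda>i. h (i + r)) ` {1..<s - 1} = h ` {r + 1..<r + n}" by (metis image_image)
  moreover have "{r..<r + n} = insert r {r + 1..<r + n}" using s5 by (auto simp: n_def)
  then have "h ` {0..<n} = insert (h r) (h ` {r + 1..<r + n})"
    using periodic_image_interval[of n h r] hp s5 by (simp add: n_def)
  ultimately have "d \<in> symdiff (flips X h r) (flips (flips X h r) (\<lambda>i. h (i + r)) s)"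
    using repeat_walk_end[OF br] dA False by (simp add: n_def)
  then have "d = h (s - 2 + r)" using violation_free_neighbour[OF IH br s5 lr] dw by simp
  then show ?thesis by (simp add: add.commute)
qed simp

text \<open>Rotating backwards \<open>2 (s - 1)\<close> times sweeps out a closed walk satisfying the hypotheses of
  \<open>hexagonal_flip_cycles\<close> with \<open>n = s - 1 \<ge> 4\<close>.\<close>

lemma violation_free_repeat_walk_absurd:
  assumes IH: "\<forall>s'<s. repeat_walks_violate s'" and b: "repeat_walk X g s" and s5: "5 \<le> s"
    and lt: "violation_free X g s"
  shows False
proof -
  define n where "n = s - 1"
  define h where "h k = g (k mod n)" for k
  have n4: "4 \<le> n" using s5 by (simp add: n_def)
  have hp: "\<forall>k. h k = h (k mod n)" by (simp add: h_def)
  have "\<forall>k<s. g k = h k"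
  proof (intro allI impI)
    fix k assume "k < s"
    then show "g k = h k"
      using b by (cases "k = n") (simp_all add: h_def n_def repeat_walk_def)
  qed
  then have bh: "repeat_walk X h s" and lth: "violation_free X h s"
    using repeat_walk_cong[of s g h X] violation_free_cong[of s g h X] b lt s5 by simp_all
  have hinj: "inj_on h {0..<n}" using bh by (simp add: repeat_walk_def n_def)
  have rotation: "repeat_walk (flips X h r) (\<lambda>i. h (i + r)) s
      \<and> violation_free (flips X h r) (\<lambda>i. h (i + r)) s" if "r \<le> 2 * n" for r
    using violation_free_rotations[OF IH bh s5 lth] hp that by (simp add: n_def)
  have neighbours_r: "d = h r \<or> d = h (r + n - 1)"
    if "r \<le> 2 * n" "d \<in> h ` {0..<n}" "symdiff (flips X h r) {d} \<in> W" for r d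
  proof -
    have "r + n - 1 = r + (s - 2)" using s5 by (simp add: n_def)
    then show ?thesis using violation_free_periodic_neighbour[OF IH bh s5 lth] hp that by (simp add: n_def)
  qed
  have "\<forall>j d. d \<in> h ` {0..<n} \<longrightarrow> symdiff (flips X h j) {d} \<in> W \<longrightarrow> d = h j \<or> d = h (j + n - 1)"
  proof (intro allI impI)
    fix j d assume "d \<in> h ` {0..<n}" "symdiff (flips X h j) {d} \<in> W"
    moreover have "flips X h j = flips X h (j mod (2 * n))"
      by (rule flips_periodic_mod) (use n4 hp hinj in auto)
    moreover have "h (j mod (2 * n)) = h j" "h (j mod (2 * n) + n - 1) = h (j + n - 1)"
    proof -
      have jn: "j mod (2 * n) mod n = j mod n" by (simp add: mod_mod_cancel)
      then show "h (j mod (2 * n)) = h j" by (simp add: h_def)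
      have "j mod (2 * n) + n - 1 = j mod (2 * n) + (n - 1)" "j + n - 1 = j + (n - 1)" using n4 by auto
      then show "h (j mod (2 * n) + n - 1) = h (j + n - 1)" using jn by (metis h_def mod_add_left_eq)
    qed
    ultimately show "d = h j \<or> d = h (j + n - 1)"
      using neighbours_r[of "j mod (2 * n)" d] n4 by (auto simp: less_imp_le)
  qed
  moreover have "\<forall>k. flips X h k \<in> W"
  proof
    fix k
    have "k mod (2 * n) \<le> 2 * n" using n4 by (simp add: less_imp_le)
    then have "flips X h (k mod (2 * n)) \<in> W"
      using rotation unfolding repeat_walk_def by (metis flips.simps(1) le0)
    moreover have "flips X h k = flips X h (k mod (2 * n))"
      by (rule flips_periodic_mod) (use n4 hp hinj in auto)
    ultimately show "flips X h k \<in> W" by simp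
  qed
  ultimately have "n = 3" using hexagonal_flip_cycles[OF _ hp hinj] n4 by simp
  then show False using n4 by simp
qed

theorem repeat_walks_violate_all: "repeat_walks_violate s"
proof (induction s rule: less_induct)
  case (less s)
  have IH: "\<forall>s'<s. repeat_walks_violate s'" using less.IH by blast
  show ?case unfolding repeat_walks_violate_def
  proof (intro allI impI)
    fix X g assume b: "repeat_walk X g s"
    then have "3 \<le> s" by (simp add: repeat_walk_def)
    then consider "s = 3" | "s = 4" | "5 \<le> s" by linarith
    then show "\<exists>j. 2 \<le> j \<and> j \<le> s - 2 \<and> violation X g j"
    proof cases
      case 1
      then show ?thesis using no_repeat_walk_3 b by blast
    next
      case 2
      then have "g 3 = g 0" "flips X g 0 \<in> W" using b unfolding repeat_walk_def by auto
      then have "violation X g 2" unfolding violation_def by simp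
      then show ?thesis using 2 by auto
    next
      case 3
      show ?thesis
      proof (rule ccontr)
        assume "\<not> ?thesis"
        then have nv: "\<forall>j. 2 \<le> j \<and> j \<le> s - 2 \<longrightarrow> \<not> violation X g j" by blast
        then have "\<not> violation X g 1" using violation_only_at_1_absurd[OF IH b 3] by blast
        have "violation_free X g s" unfolding violation_free_def
        proof (intro allI impI)
          fix j assume "1 \<le> j \<and> j \<le> s - 2"
          then consider "j = 1" | "2 \<le> j \<and> j \<le> s - 2" by linarith
          then show "\<not> violation X g j" using nv \<open>\<not> violation X g 1\<close> by cases auto
        qed
        then show False using violation_free_repeat_walk_absurd[OF IH b 3] by simp
      qed
    qed
  qed
qed

theorem no_violation_free_repeat_walk: "repeat_walk X g s \<Longrightarrow> violation_free X g s \<Longrightarrow> False"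
  using repeat_walks_violate_all[of s] unfolding repeat_walks_violate_def violation_free_def by fastforce

end

section \<open>Partial cubes\<close>

locale cube_embedding =
  fixes V :: "'a set" and E :: "'a \<Rightarrow> 'a \<Rightarrow> bool" and f :: "'a \<Rightarrow> nat set"
  assumes gr: "graph V E" and conn: "connected_graph V E"
    and fin: "\<forall>v\<in>V. finite (f v)" and finj: "inj_on f V"
    and iso: "\<forall>u\<in>V. \<forall>v\<in>V. gdist V E u v = card (symdiff (f u) (f v))"
begin

lemma edge_in_V: "E u v \<Longrightarrow> u \<in> V \<and> v \<in> V"
  using gr by (simp add: graph_def)

lemma no_loop: "\<not> E u u"
  using gr by (simp add: graph_def)

lemma finite_f: "v \<in> V \<Longrightarrow> finite (f v)"
  using fin by simp

lemma is_walk_drop: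
  assumes "is_walk V E xs" "p < length xs"
  shows "is_walk V E (drop p xs)"
  unfolding is_walk_def
proof (intro conjI allI impI)
  show "drop p xs \<noteq> []" using assms(2) by (simp add: drop_eq_Nil)
  show "set (drop p xs) \<subseteq> V" using assms(1) set_drop_subset[of p xs] unfolding is_walk_def by blast
  fix i assume "Suc i < length (drop p xs)"
  then show "E (drop p xs ! i) (drop p xs ! Suc i)" using assms(1) unfolding is_walk_def by simp
qed

lemma is_walk_take:
  assumes "is_walk V E xs" "p < length xs"
  shows "is_walk V E (take (Suc p) xs)"
  unfolding is_walk_def
proof (intro conjI allI impI)
  show "take (Suc p) xs \<noteq> []" using assms(2) by (cases xs) auto
  show "set (take (Suc p) xs) \<subseteq> V" using assms(1) set_take_subset[of "Suc p" xs] unfolding is_walk_def by blast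
  fix i assume "Suc i < length (take (Suc p) xs)"
  then show "E (take (Suc p) xs ! i) (take (Suc p) xs ! Suc i)" using assms(1) unfolding is_walk_def by simp
qed

lemma gdist_le_walk:
  assumes "is_walk V E xs"
  shows "gdist V E (hd xs) (last xs) \<le> length xs - 1"
proof -
  have "xs \<noteq> []" using assms by (simp add: is_walk_def)
  then have "length xs = Suc (length xs - 1)" by simp
  then have "\<exists>ys. is_walk V E ys \<and> hd ys = hd xs \<and> last ys = last xs \<and> length ys = Suc (length xs - 1)"
    using assms by blast
  then show ?thesis unfolding gdist_def by (rule Least_le)
qed

lemma gdist_walk_exists:
  assumes "u \<in> V" "v \<in> V"
  shows "\<exists>xs. is_walk V E xs \<and> hd xs = u \<and> last xs = v \<and> length xs = Suc (gdist V E u v)"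
proof -
  obtain xs where xs: "is_walk V E xs" "hd xs = u" "last xs = v"
    using conn assms unfolding connected_graph_def by blast
  then have "length xs = Suc (length xs - 1)" by (cases xs) (auto simp: is_walk_def)
  then have "\<exists>n xs. is_walk V E xs \<and> hd xs = u \<and> last xs = v \<and> length xs = Suc n" using xs by blast
  then show ?thesis unfolding gdist_def by (rule LeastI_ex)
qed

lemma gdist_triangle:
  assumes "u \<in> V" "m \<in> V" "v \<in> V"
  shows "gdist V E u v \<le> gdist V E u m + gdist V E m v"
proof -
  have "card (symdiff (f u) (f v)) \<le> card (symdiff (f u) (f m) \<union> symdiff (f m) (f v))"
    by (rule card_mono) (use finite_f assms symdiff_triangle in \<open>simp_all add: finite_symdiff\<close>)
  also have "\<dots> \<le> card (symdiff (f u) (f m)) + card (symdiff (f m) (f v))" by (rule card_Un_le)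
  finally show ?thesis using iso assms by simp
qed

lemma card_edge_symdiff:
  assumes "E u v"
  shows "card (symdiff (f u) (f v)) = 1"
proof -
  have uv: "u \<in> V" "v \<in> V" using edge_in_V[OF assms] by auto
  have w: "is_walk V E [u, v]" using assms uv by (auto simp: is_walk_def less_Suc_eq)
  have "gdist V E u v \<le> 1" using gdist_le_walk[OF w] by simp
  then have le: "card (symdiff (f u) (f v)) \<le> 1" using iso uv by simp
  have "u \<noteq> v" using assms no_loop by auto
  then have "f u \<noteq> f v" using finj uv by (metis inj_onD)
  then have "symdiff (f u) (f v) \<noteq> {}" by (simp add: symdiff_eq_empty_iff)
  moreover have "finite (symdiff (f u) (f v))" using fin uv by (simp add: finite_symdiff)
  ultimately have "card (symdiff (f u) (f v)) \<noteq> 0" by simp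
  then show ?thesis using le by simp
qed

lemma edge_flip:
  assumes "E u v"
  shows "\<exists>d. symdiff (f u) (f v) = {d} \<and> f v = symdiff (f u) {d}"
proof -
  obtain d where "symdiff (f u) (f v) = {d}" using card_edge_symdiff[OF assms] by (auto simp: card_1_singleton_iff)
  then show ?thesis using symdiff_eq_singleton by blast
qed

lemma edge_if_card_one:
  assumes "u \<in> V" "v \<in> V" "card (symdiff (f u) (f v)) = 1"
  shows "E u v"
proof -
  have g1: "gdist V E u v = 1" using iso assms by simp
  obtain xs where xs0: "is_walk V E xs" "hd xs = u" "last xs = v" "length xs = Suc (gdist V E u v)"
    using gdist_walk_exists[OF assms(1,2)] by blast
  have xs: "is_walk V E xs" "hd xs = u" "last xs = v" "length xs = 2" using xs0 g1 by simp_all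
  have ne: "xs \<noteq> []" using xs(4) by auto
  have "E (xs ! 0) (xs ! Suc 0)" using xs(1,4) unfolding is_walk_def by simp
  moreover have "xs ! 0 = u" using xs(2) ne by (simp add: hd_conv_nth)
  moreover have "xs ! Suc 0 = v" using xs(3,4) ne by (simp add: last_conv_nth)
  ultimately show ?thesis by simp
qed

lemma edge_if_flip:
  assumes "u \<in> V" "w \<in> V" "f w = symdiff (f u) {d}"
  shows "E u w"
  using edge_if_card_one[OF assms(1,2)] assms(3) by simp

lemma image_geodesic_step:
  assumes "X \<in> f ` V" "Z \<in> f ` V" "X \<noteq> Z"
  shows "\<exists>d \<in> symdiff X Z. symdiff X {d} \<in> f ` V"
proof -
  obtain x z where xz: "x \<in> V" "z \<in> V" "X = f x" "Z = f z" using assms by auto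
  obtain xs where xs: "is_walk V E xs" "hd xs = x" "last xs = z" "length xs = Suc (gdist V E x z)"
    using gdist_walk_exists[OF xz(1,2)] by blast
  have "gdist V E x z \<noteq> 0"
  proof
    assume "gdist V E x z = 0"
    then have "card (symdiff X Z) = 0" using iso xz by simp
    moreover have "finite (symdiff X Z)" using fin xz by (simp add: finite_symdiff)
    ultimately show False using assms(3) by (simp add: symdiff_eq_empty_iff)
  qed
  then have l2: "2 \<le> length xs" using xs by simp
  have ne: "xs \<noteq> []" using l2 by auto
  have "E (xs ! 0) (xs ! Suc 0)" using xs(1) l2 unfolding is_walk_def by simp
  moreover have "xs ! 0 = x" using xs(2) ne by (simp add: hd_conv_nth)
  ultimately have e: "E x (xs ! 1)" by simp
  have "gdist V E (hd (drop 1 xs)) (last (drop 1 xs)) \<le> length (drop 1 xs) - 1"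
    by (rule gdist_le_walk[OF is_walk_drop[OF xs(1)]]) (use l2 in simp)
  moreover have "hd (drop 1 xs) = xs ! 1" using l2 by (simp add: hd_drop_conv_nth)
  moreover have "last (drop 1 xs) = z" using l2 xs by simp
  ultimately have lt: "gdist V E (xs ! 1) z < gdist V E x z" using xs l2 by simp
  obtain d where d: "f (xs!1) = symdiff (f x) {d}" using edge_flip[OF e] by blast
  have m: "xs ! 1 \<in> V" using edge_in_V[OF e] by simp
  have "card (symdiff (symdiff X {d}) Z) < card (symdiff X Z)" using lt iso xz m d by simp
  moreover have "finite X" "finite Z" using fin xz by auto
  ultimately have "d \<in> symdiff X Z" using card_symdiff_decrease by blast
  moreover have "symdiff X {d} \<in> f ` V" using d m xz by auto
  ultimately show ?thesis by blast
qed

lemma shortest_path_gdist: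
  assumes sp: "shortest_path V E u v xs" and p: "p < length xs"
  shows "gdist V E (xs ! p) v = length xs - 1 - p" and "xs ! p \<in> V"
proof -
  have w: "is_walk V E xs" and hd: "hd xs = u" and la: "last xs = v" and len: "length xs = Suc (gdist V E u v)"
    using sp by (auto simp: shortest_path_def is_path_def)
  have ne: "xs \<noteq> []" using p by auto
  show xpV: "xs ! p \<in> V" using w p unfolding is_walk_def by (meson nth_mem subsetD)
  have uV: "u \<in> V" using w ne hd unfolding is_walk_def by (metis hd_in_set subsetD)
  have vV: "v \<in> V" using w ne la unfolding is_walk_def by (metis last_in_set subsetD)
  have a: "gdist V E (xs ! p) v \<le> length xs - 1 - p"
  proof -
    have "gdist V E (hd (drop p xs)) (last (drop p xs)) \<le> length (drop p xs) - 1"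
      by (rule gdist_le_walk[OF is_walk_drop[OF w p]])
    moreover have "hd (drop p xs) = xs ! p" using p by (simp add: hd_drop_conv_nth)
    moreover have "last (drop p xs) = v" using p la by simp
    ultimately show ?thesis by simp
  qed
  have b: "gdist V E u (xs ! p) \<le> p"
  proof -
    have "gdist V E (hd (take (Suc p) xs)) (last (take (Suc p) xs)) \<le> length (take (Suc p) xs) - 1"
      by (rule gdist_le_walk[OF is_walk_take[OF w p]])
    moreover have "hd (take (Suc p) xs) = u" using hd ne by simp
    moreover have "last (take (Suc p) xs) = xs ! p" using p by (simp add: take_Suc_conv_app_nth)
    ultimately show ?thesis using p by simp
  qed
  have "gdist V E u v \<le> gdist V E u (xs ! p) + gdist V E (xs ! p) v" by (rule gdist_triangle[OF uV xpV vV])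
  then show "gdist V E (xs ! p) v = length xs - 1 - p" using a b len by linarith
qed

subsection \<open>Closed flip walks are convex cycles\<close>

context
  fixes X :: "nat set" and h :: "nat \<Rightarrow> nat" and n :: nat
  assumes n2: "2 \<le> n" and hp: "\<forall>k. h k = h (k mod n)" and hinj: "inj_on h {0..<n}"
    and in_image: "\<forall>k. flips X h k \<in> f ` V"
begin

abbreviation cycle_vertex :: "nat \<Rightarrow> 'a" where
  "cycle_vertex k \<equiv> inv_into V f (flips X h k)"

abbreviation flip_cycle :: "'a list" where
  "flip_cycle \<equiv> map cycle_vertex [0..<2*n]"

lemma cycle_vertex_in_V: "cycle_vertex k \<in> V"
  using in_image by (meson inv_into_into)

lemma f_cycle_vertex: "f (cycle_vertex k) = flips X h k"
  using in_image by (simp add: f_inv_into_f)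

lemma cycle_vertex_mod: "cycle_vertex k = cycle_vertex (k mod (2*n))"
  using flips_periodic_mod[OF _ hp hinj, of X k] n2 by simp

lemma cycle_vertex_edge: "E (cycle_vertex k) (cycle_vertex (Suc k))"
  by (rule edge_if_flip[OF cycle_vertex_in_V cycle_vertex_in_V]) (unfold f_cycle_vertex, simp)

lemma set_flip_cycle: "set flip_cycle = range cycle_vertex"
proof -
  have "cycle_vertex k \<in> cycle_vertex ` {0..<2*n}" for k
    using cycle_vertex_mod[of k] n2 by (intro image_eqI[of _ _ "k mod (2*n)"]) auto
  then show ?thesis by auto
qed

lemma flip_cycle_nth_Suc_mod:
  assumes "i < 2*n"
  shows "flip_cycle ! i = cycle_vertex i" "flip_cycle ! (Suc i mod length flip_cycle) = cycle_vertex (Suc i)"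
  using assms n2 cycle_vertex_mod[of "Suc i"] by simp_all

lemma is_cycle_flip_cycle: "is_cycle V E flip_cycle"
  unfolding is_cycle_def
proof (intro conjI allI impI)
  show "3 \<le> length flip_cycle" using n2 by simp
  have "inj_on (inv_into V f) (flips X h ` {0..<2*n})"
    by (rule inj_on_inv_into) (use in_image in auto)
  moreover have "inj_on (flips X h) {0..<2*n}" using flips_periodic_inj_on[OF _ hp hinj] n2 by simp
  ultimately have "inj_on (inv_into V f \<circ> flips X h) {0..<2*n}" by (simp add: comp_inj_on)
  then show "distinct flip_cycle" by (simp add: distinct_map o_def)
  show "set flip_cycle \<subseteq> V" using cycle_vertex_in_V by auto
  fix i assume "i < length flip_cycle"
  then show "E (flip_cycle ! i) (flip_cycle ! (Suc i mod length flip_cycle))"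
    using flip_cycle_nth_Suc_mod cycle_vertex_edge by simp
qed

lemma flip_cycle_edges:
  "{cycle_vertex k, cycle_vertex (Suc k)} \<in> cycle_edges flip_cycle"
  "{cycle_vertex k, cycle_vertex (k + 2*n - 1)} \<in> cycle_edges flip_cycle"
proof -
  show next_edge: "{cycle_vertex k, cycle_vertex (Suc k)} \<in> cycle_edges flip_cycle" for k
  proof -
    define i where "i = k mod (2*n)"
    have i: "i < 2*n" using n2 by (simp add: i_def)
    have "Suc i mod (2*n) = Suc k mod (2*n)" by (simp add: i_def mod_Suc_eq)
    then have "cycle_vertex (Suc i) = cycle_vertex (Suc k)" by (metis cycle_vertex_mod)
    moreover have "cycle_vertex i = cycle_vertex k" using cycle_vertex_mod[of k] by (simp add: i_def)
    ultimately have "{cycle_vertex k, cycle_vertex (Suc k)} = {flip_cycle ! i, flip_cycle ! (Suc i mod length flip_cycle)}"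
      using flip_cycle_nth_Suc_mod[OF i] by simp
    moreover have "i < length flip_cycle" using i by simp
    ultimately show ?thesis unfolding cycle_edges_def by blast
  qed
  have "cycle_vertex (Suc (k + 2*n - 1)) = cycle_vertex k"
    using flips_periodic_double_period[OF _ hp hinj, of X k] n2 by simp
  then show "{cycle_vertex k, cycle_vertex (k + 2*n - 1)} \<in> cycle_edges flip_cycle"
    using next_edge[of "k + 2*n - 1"] by (simp add: insert_commute)
qed

context
  assumes locally_convex: "\<forall>j d. d \<in> h ` {0..<n} \<longrightarrow> symdiff (flips X h j) {d} \<in> f ` V
    \<longrightarrow> d = h j \<or> d = h (j + n - 1)"
begin

lemma flip_cycle_geodesic_step:
  assumes e: "E (cycle_vertex j) w" and closer: "gdist V E w (cycle_vertex i) < gdist V E (cycle_vertex j) (cycle_vertex i)"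
  shows "w = cycle_vertex (Suc j) \<or> w = cycle_vertex (j + 2*n - 1)"
proof -
  obtain d where d: "f w = symdiff (flips X h j) {d}" using edge_flip[OF e] f_cycle_vertex by metis
  have wV: "w \<in> V" using edge_in_V[OF e] by simp
  have "card (symdiff (symdiff (flips X h j) {d}) (flips X h i)) < card (symdiff (flips X h j) (flips X h i))"
    using closer iso wV cycle_vertex_in_V d by (simp add: f_cycle_vertex)
  then have "d \<in> symdiff (flips X h j) (flips X h i)"
    using card_symdiff_decrease finite_f cycle_vertex_in_V f_cycle_vertex by metis
  moreover have "symdiff (flips X h j) (flips X h i) \<subseteq> symdiff X (flips X h j) \<union> symdiff X (flips X h i)"
    by (auto simp: symdiff_def)
  ultimately have "d \<in> h ` {0..<n}"
    using flips_periodic_subset[OF hp, of X j] flips_periodic_subset[OF hp, of X i] n2 by auto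
  moreover have "symdiff (flips X h j) {d} \<in> f ` V" using d wV by (metis image_eqI)
  ultimately have "d = h j \<or> d = h (j + n - 1)" using locally_convex by blast
  moreover have next_flip: "f (cycle_vertex (Suc j)) = symdiff (flips X h j) {h j}"
    by (unfold f_cycle_vertex) simp
  moreover have prev_flip: "f (cycle_vertex (j + 2*n - 1)) = symdiff (flips X h j) {h (j + n - 1)}"
    unfolding f_cycle_vertex using flips_periodic_pred[OF _ hp hinj] n2 by simp
  ultimately have "f w = f (cycle_vertex (Suc j)) \<or> f w = f (cycle_vertex (j + 2*n - 1))"
    unfolding d by metis
  then show ?thesis using finj wV cycle_vertex_in_V by (metis inj_onD)
qed

lemma convex_flip_cycle: "convex_cycle V E flip_cycle"
  unfolding convex_cycle_def convex_sub_def
proof (rule conjI[OF is_cycle_flip_cycle], intro ballI allI impI)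
  fix u v xs assume u: "u \<in> set flip_cycle" and v: "v \<in> set flip_cycle" and sp: "shortest_path V E u v xs"
  obtain i where vi: "v = cycle_vertex i" using v set_flip_cycle by auto
  have w: "is_walk V E xs" and hd: "hd xs = u" and ne: "xs \<noteq> []"
    using sp by (auto simp: shortest_path_def is_path_def is_walk_def)
  have step: "xs ! Suc p = cycle_vertex (Suc j) \<or> xs ! Suc p = cycle_vertex (j + 2*n - 1)"
    if p: "Suc p < length xs" and j: "xs ! p = cycle_vertex j" for p j
  proof (rule flip_cycle_geodesic_step)
    show "E (cycle_vertex j) (xs ! Suc p)" using w p j unfolding is_walk_def by metis
    show "gdist V E (xs ! Suc p) (cycle_vertex i) < gdist V E (cycle_vertex j) (cycle_vertex i)"
      using shortest_path_gdist(1)[OF sp p] shortest_path_gdist(1)[of u v xs p] sp p j vi by simp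
  qed
  have on_cycle: "\<exists>j. xs ! p = cycle_vertex j" if "p < length xs" for p
    using that
  proof (induction p)
    case 0
    then show ?case using hd ne u set_flip_cycle by (auto simp: hd_conv_nth)
  next
    case (Suc p)
    then obtain j where "xs ! p = cycle_vertex j" by auto
    then show ?case using step[OF Suc.prems] by blast
  qed
  have "set xs \<subseteq> set flip_cycle"
  proof
    fix x assume "x \<in> set xs"
    then obtain p where "p < length xs" "x = xs ! p" by (metis in_set_conv_nth)
    then show "x \<in> set flip_cycle" using on_cycle set_flip_cycle by blast
  qed
  moreover have "{xs ! p, xs ! Suc p} \<in> cycle_edges flip_cycle" if p: "Suc p < length xs" for p
  proof -
    obtain j where j: "xs ! p = cycle_vertex j" using on_cycle p by fastforce
    then show ?thesis using step[OF p j] flip_cycle_edges by auto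
  qed
  ultimately show "set xs \<subseteq> set flip_cycle
      \<and> (\<forall>p. Suc p < length xs \<longrightarrow> {xs ! p, xs ! Suc p} \<in> cycle_edges flip_cycle)"
    by blast
qed

end

end

lemma Theta_iff:
  assumes ab: "E a b" and uv: "E u v"
  shows "Theta V E (a, b) (u, v) \<longleftrightarrow> symdiff (f a) (f b) = symdiff (f u) (f v)"
proof -
  obtain \<alpha> where al: "symdiff (f a) (f b) = {\<alpha>}" "f b = symdiff (f a) {\<alpha>}" using edge_flip[OF ab] by blast
  obtain \<beta> where be: "symdiff (f u) (f v) = {\<beta>}" "f v = symdiff (f u) {\<beta>}" using edge_flip[OF uv] by blast
  have V: "a \<in> V" "b \<in> V" "u \<in> V" "v \<in> V" using edge_in_V[OF ab] edge_in_V[OF uv] by auto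
  define D where "D = symdiff (f a) (f u)"
  have "finite D" unfolding D_def using finite_f V by (simp add: finite_symdiff)
  moreover have "symdiff (f b) (f v) = symdiff (symdiff D {\<alpha>}) {\<beta>}"
    "symdiff (f a) (f v) = symdiff D {\<beta>}" "symdiff (f b) (f u) = symdiff D {\<alpha>}"
    unfolding al(2) be(2) D_def by (auto simp: symdiff_def)
  then have "gdist V E a u = card D" "gdist V E b v = card (symdiff (symdiff D {\<alpha>}) {\<beta>})"
    "gdist V E a v = card (symdiff D {\<beta>})" "gdist V E b u = card (symdiff D {\<alpha>})"
    using iso V by (simp_all add: D_def)
  ultimately show ?thesis
    unfolding Theta_def al(1) be(1) using card_symdiff_symdiff_iff by simp
qed

lemma Fclass_eq:
  assumes "E a b" "E x y" "symdiff (f a) (f b) = symdiff (f x) (f y)"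
  shows "Fclass V E (a, b) = Fclass V E (x, y)"
  unfolding Fclass_def using Theta_iff[OF assms(1)] Theta_iff[OF assms(2)] assms(3) by auto

lemma Fclass_mem_Fvert:
  assumes ab: "E a b" and d: "symdiff (f a) (f b) = {d}"
    and u: "u \<in> V" and w: "symdiff (f u) {d} \<in> f ` V"
  shows "Fclass V E (a, b) \<in> Fvert V E u"
proof -
  obtain w where wV: "w \<in> V" and fw: "f w = symdiff (f u) {d}" using w by force
  have uw: "E u w" by (rule edge_if_flip[OF u wV fw])
  have "Fclass V E (a, b) = Fclass V E (u, w)" by (rule Fclass_eq[OF ab uw]) (simp add: d fw)
  then show ?thesis unfolding Fvert_def using uw by blast
qed

definition path_coord :: "'a list \<Rightarrow> nat \<Rightarrow> nat" where
  "path_coord p i = the_elem (symdiff (f (p ! i)) (f (p ! Suc i)))"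

lemma path_coord:
  assumes "is_walk V E p" "Suc i < length p"
  shows "symdiff (f (p ! i)) (f (p ! Suc i)) = {path_coord p i}"
    and "f (p ! Suc i) = symdiff (f (p ! i)) {path_coord p i}"
proof -
  have "E (p ! i) (p ! Suc i)" using assms unfolding is_walk_def by blast
  then obtain d where "symdiff (f (p ! i)) (f (p ! Suc i)) = {d}" "f (p ! Suc i) = symdiff (f (p ! i)) {d}"
    using edge_flip by blast
  then show "symdiff (f (p ! i)) (f (p ! Suc i)) = {path_coord p i}"
    and "f (p ! Suc i) = symdiff (f (p ! i)) {path_coord p i}"
    by (simp_all add: path_coord_def)
qed

lemma flips_path_coord:
  assumes "is_walk V E p" "i + k < length p"
  shows "flips (f (p ! i)) (\<lambda>t. path_coord p (t + i)) k = f (p ! (i + k))"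
  using assms(2)
proof (induction k)
  case 0
  then show ?case by simp
next
  case (Suc k)
  then show ?case using path_coord(2)[OF assms(1), of "i + k"] by (simp add: add.commute)
qed

lemma shortest_path_if_inj_on_path_coord:
  assumes p: "is_path V E p" and inj: "inj_on (path_coord p) {0..<length p - 1}"
  shows "shortest_path V E (hd p) (last p) p"
proof -
  define L where "L = length p - 1"
  have w: "is_walk V E p" and ne: "p \<noteq> []" using p by (auto simp: is_path_def is_walk_def)
  then have L: "L < length p" by (simp add: L_def)
  have "f (p ! L) = flips (f (p ! 0)) (path_coord p) (0 + L)"
    using flips_path_coord[OF w, of 0 L] L by simp
  also have "\<dots> = symdiff (f (p ! 0)) (path_coord p ` {0..<L})"
    using flips_add_inj_on[of "path_coord p" 0 L] inj by (simp add: L_def)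
  finally have "card (symdiff (f (p ! 0)) (f (p ! L))) = L"
    using card_image[OF inj] by (simp add: L_def)
  moreover have "p ! 0 \<in> V" "p ! L \<in> V" using w L ne unfolding is_walk_def by auto
  ultimately have "gdist V E (hd p) (last p) = L" using iso ne by (simp add: hd_conv_nth last_conv_nth L_def)
  then show ?thesis unfolding shortest_path_def using p ne by (simp add: L_def)
qed

lemma type_II_violation_free:
  assumes t: "type_II V E p" and s: "i0 + s < length p"
  shows "flip_set.violation_free (f ` V) (f (p ! i0)) (\<lambda>t. path_coord p (t + i0)) s"
  unfolding flip_set.violation_free_def
proof (intro allI impI notI)
  fix j assume j: "1 \<le> j \<and> j \<le> s - 2" and v: "flip_set.violation (f ` V) (f (p ! i0)) (\<lambda>t. path_coord p (t + i0)) j"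
  define i where "i = i0 + j"
  have w: "is_walk V E p" using t by (simp add: type_II_def is_path_def)
  have i: "1 \<le> i" "i \<le> length p - 3" "i + 2 < length p" using j s by (auto simp: i_def)
  have pV: "p ! k \<in> V" if "k < length p" for k using w that unfolding is_walk_def by auto
  have step: "E (p ! k) (p ! Suc k)" "symdiff (f (p ! k)) (f (p ! Suc k)) = {path_coord p k}"
    if "Suc k < length p" for k
    using w that path_coord(1)[OF w that] unfolding is_walk_def by auto
  have "Suc (i - 1) = i" using i by simp
  then have e1: "E (p ! (i - 1)) (p ! i)" and c1: "symdiff (f (p ! (i - 1))) (f (p ! i)) = {path_coord p (i - 1)}"
    using step[of "i - 1"] i by auto
  have e2: "E (p ! (i + 1)) (p ! (i + 2))" and c2: "symdiff (f (p ! (i + 1))) (f (p ! (i + 2))) = {path_coord p (i + 1)}"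
    using step[of "i + 1"] i by auto
  have "flips (f (p ! i0)) (\<lambda>t. path_coord p (t + i0)) (j + 2) = f (p ! (i + 2))"
    using flips_path_coord[OF w, of i0 "j + 2"] i by (simp add: i_def add.assoc)
  moreover have "flips (f (p ! i0)) (\<lambda>t. path_coord p (t + i0)) (j - 1) = f (p ! (i - 1))"
    using flips_path_coord[OF w, of i0 "j - 1"] i j by (simp add: i_def)
  moreover have "j - 1 + i0 = i - 1" "j + 1 + i0 = i + 1" using j by (auto simp: i_def)
  ultimately consider "symdiff (f (p ! (i + 2))) {path_coord p (i - 1)} \<in> f ` V"
    | "symdiff (f (p ! (i - 1))) {path_coord p (i + 1)} \<in> f ` V"
    using v unfolding flip_set.violation_def by auto
  then show False
  proof cases
    case 1
    then have "Fclass V E (p ! (i - 1), p ! i) \<in> Fvert V E (p ! (i + 2))"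
      using Fclass_mem_Fvert[OF e1 c1 pV] i by blast
    then show False using t i unfolding type_II_def by blast
  next
    case 2
    then have "Fclass V E (p ! (i + 1), p ! (i + 2)) \<in> Fvert V E (p ! (i - 1))"
      using Fclass_mem_Fvert[OF e2 c2 pV] i by auto
    then show False using t i unfolding type_II_def by blast
  qed
qed

text \<open>The repeat walk is a shortest segment of \<open>p\<close> between two edges flipping the same coordinate.\<close>

lemma repeat_walk_if_not_inj_on_path_coord:
  assumes p: "is_path V E p" and ninj: "\<not> inj_on (path_coord p) {0..<length p - 1}"
  obtains i0 s where "i0 + s < length p" "flip_set.repeat_walk (f ` V) (f (p ! i0)) (\<lambda>t. path_coord p (t + i0)) s"
proof -
  define L where "L = length p - 1"
  define repeat where "repeat m \<longleftrightarrow> (\<exists>i. 0 < m \<and> i + m < L \<and> path_coord p i = path_coord p (i + m))" for m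
  have w: "is_walk V E p" and dp: "distinct p" using p by (auto simp: is_path_def)
  have pV: "p ! k \<in> V" if "k < length p" for k using w that unfolding is_walk_def by auto
  have "\<exists>m. repeat m"
  proof (rule ccontr)
    assume none: "\<nexists>m. repeat m"
    have "inj_on (path_coord p) {0..<L}"
    proof (rule linorder_inj_onI')
      fix x y assume "x \<in> {0..<L}" "y \<in> {0..<L}" "x < y"
      then have "0 < y - x" "x + (y - x) < L" "x + (y - x) = y" by auto
      then show "path_coord p x \<noteq> path_coord p y" using none unfolding repeat_def by metis
    qed
    then show False using ninj by (simp add: L_def)
  qed
  then obtain m where "repeat m" and m_least: "\<And>d. d < m \<Longrightarrow> \<not> repeat d"
    using exists_least_iff[of repeat] by blast
  then obtain i0 where m: "0 < m" "i0 + m < L" "path_coord p i0 = path_coord p (i0 + m)"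
    unfolding repeat_def by blast
  define g where "g t = path_coord p (t + i0)" for t
  have flips: "flips (f (p ! i0)) g k = f (p ! (i0 + k))" if "k \<le> m + 1" for k
    unfolding g_def by (rule flips_path_coord[OF w]) (use that m in \<open>simp add: L_def\<close>)
  have inj: "inj_on g {a..<a + m}" if "a \<le> 1" for a
  proof (rule linorder_inj_onI')
    fix x y assume "x \<in> {a..<a + m}" "y \<in> {a..<a + m}" "x < y"
    then have "\<not> repeat (y - x)" "0 < y - x" "x + i0 + (y - x) < L" "x + i0 + (y - x) = y + i0"
      using m_least m that by auto
    then show "g x \<noteq> g y" unfolding repeat_def g_def by metis
  qed
  have "2 \<le> m"
  proof (rule ccontr)
    assume "\<not> 2 \<le> m"
    then have m1: "m = 1" using m by simp
    have "f (p ! (i0 + 2)) = flips (f (p ! i0)) g 2" using flips[of 2] m1 by simp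
    also have "\<dots> = f (p ! i0)" using m(3) m1 by (simp add: g_def eval_nat_numeral)
    finally have "p ! (i0 + 2) = p ! i0" using inj_onD[OF finj] pV m m1 by (simp add: L_def)
    moreover have "i0 + 2 < length p" using m m1 by (simp add: L_def)
    ultimately show False using dp by (simp add: nth_eq_iff_index_eq)
  qed
  moreover have "\<forall>k \<le> m + 1. flips (f (p ! i0)) g k \<in> f ` V"
    using flips pV m by (auto simp: L_def)
  ultimately have "flip_set.repeat_walk (f ` V) (f (p ! i0)) g (m + 1)"
    unfolding flip_set.repeat_walk_def using inj[of 0] inj[of 1] m(3) by (simp add: g_def add.commute)
  moreover have "i0 + (m + 1) < length p" using m by (simp add: L_def)
  ultimately show ?thesis using that unfolding g_def by blast
qed

lemma flip_system_image:
  assumes "\<forall>cs. convex_cycle V E cs \<longrightarrow> length cs = 6"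
  shows "flip_system (f ` V)"
proof
  fix X Z assume "X \<in> f ` V" "Z \<in> f ` V" "X \<noteq> Z"
  then show "\<exists>d\<in>symdiff X Z. symdiff X {d} \<in> f ` V" by (rule image_geodesic_step)
next
  fix n h X
  assume "2 \<le> n" "\<forall>k. h k = h (k mod n)" "inj_on h {0..<n}" "\<forall>k. flips X h k \<in> f ` V"
    "\<forall>j d. d \<in> h ` {0..<n} \<longrightarrow> symdiff (flips X h j) {d} \<in> f ` V \<longrightarrow> d = h j \<or> d = h (j + n - 1)"
  then have "length (flip_cycle X h n) = 6" using convex_flip_cycle assms by blast
  then show "n = 3" by simp
qed

theorem type_II_shortest_path:
  assumes "\<forall>cs. convex_cycle V E cs \<longrightarrow> length cs = 6" and t: "type_II V E p"
  shows "shortest_path V E (hd p) (last p) p"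
proof -
  interpret flip_system "f ` V" by (rule flip_system_image[OF assms(1)])
  have p: "is_path V E p" using t by (simp add: type_II_def)
  show ?thesis
  proof (cases "inj_on (path_coord p) {0..<length p - 1}")
    case True
    then show ?thesis by (rule shortest_path_if_inj_on_path_coord[OF p])
  next
    case False
    then obtain i0 s where "i0 + s < length p"
      "repeat_walk (f (p ! i0)) (\<lambda>t. path_coord p (t + i0)) s"
      using repeat_walk_if_not_inj_on_path_coord[OF p] by blast
    then show ?thesis using no_violation_free_repeat_walk type_II_violation_free[OF t] by blast
  qed
qed

end

theorem mainTheorem6:
  fixes V :: "'a set" and E :: "'a \<Rightarrow> 'a \<Rightarrow> bool" and p :: "'a list"
  assumes "finite V"
    and "partial_cube V E"
    and "\<forall>cs. convex_cycle V E cs \<longrightarrow> length cs = 6"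
    and "is_path V E p" and "length p \<ge> 4"
    and "type_II V E p"
  shows "shortest_path V E (hd p) (last p) p"
proof -
  obtain f :: "'a \<Rightarrow> nat set" where "\<forall>v\<in>V. finite (f v)" "inj_on f V"
    "\<forall>u\<in>V. \<forall>v\<in>V. gdist V E u v = card (symdiff (f u) (f v))"
    using assms(2) unfolding partial_cube_def symdiff_def by blast
  then have "cube_embedding V E f" using assms(2) by (simp add: cube_embedding_def partial_cube_def)
  then show ?thesis by (rule cube_embedding.type_II_shortest_path[OF _ assms(3,6)])
qed

end
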